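(* Let $T>0$, $u_0\in C(\overline\Omega)$ with $u_0\ge0$, and $g\ge0$. Let $u\in C(\overline\Omega\times[0,T])$ be a supersolution of the problem $$u_t(x,t)=\int_GK_\epsilon(x,y)(u(y,t)-u(x,t))\,dy\ (x\in\Omega),\quad u(x,t)=g(x,t)\ (x\notin\Omega),\quad u(x,0)=u_0(x)\ (x\in\Omega).$$ Then $u\ge0$.
   Context: $G$ is a Carnot group, $\Omega\subset G$ a bounded connected open set, and $K_\epsilon(x,y)$ is the positive kernel $$K_\epsilon(x,y)=\frac{c(x)}{\epsilon^{Q+2}}a\big((\exp(E(x)\exp^{-1}(y^{-1}x)))^{-1}\big)J\big(\exp(L^{-1}(x)\exp^{-1}(\delta_{\epsilon^{-1}}(y^{-1}x)))\big),$$ where: $\mathfrak g=V_1\oplus\dots\oplus V_m$ is the stratified Lie algebra with adapted basis $X_1,\dots,X_n$, $n_k=\dim V_k$, $Q=\sum kn_k$, $\lambda_j=k$ if $X_j\in V_k$, $\phi_i$ the coordinates w.r.t. the basis, matrices act on $\mathfrak g$ via these coordinates, $\delta_r(\sum x_jX_j)=\sum r^{\lambda_j}x_jX_j$ (transported to $G$ by $\exp$), Haar measure is Lebesgue measure via $\exp$; $J\in L^1(G)$ positive, compactly supported with support $F$, $J(x)=J(x^{-1})$, $\int_{\mathbb R^n}J(\exp\sum t_rX_r)t_i\,dt=0$, $\int_{\mathbb R^n}J(\exp\sum t_rX_r)t_it_j\,dt=C(J)\delta_{ij}$, $C(J)>0$; $\tilde A=(a_{ij})_{i,j\le n_1}$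 symmetric positive definite smooth on $\overline\Omega$ with Cholesky factor $\tilde L$, $A,L$ their $n\times n$ extensions by the identity block; $W=\mathrm{diag}(\tilde b_i)$ with $\tilde b_i=b_i$ ($i\le n_1$), $b_i/\epsilon^2$ ($n_1<i\le n_1+n_2$), $1$ otherwise, $b_i$ smooth; $F'=\{y\exp(\delta_\epsilon L(y)\exp^{-1}(z^{-1})):y\in\Omega,z\in F\}$; $a(x)=\sum_i\phi_i(\exp^{-1}x)+M$, $M>0$ large so $a\ge\beta>0$ on $F'$; $c(x)=2[C(J)M(\det A(x))^{1/2}]^{-1}$, $E(x)=\frac M2W(x)A(x)^{-1}$. A function $u\in C([0,T];L^1(\Omega))$ is a supersolution of the problem if $u_t(x,t)\ge\int_GK_\epsilon(x,y)(u(y,t)-u(x,t))\,dy$ for $x\in\Omega$, $t>0$; $u(x,t)\ge g(x,t)$ for $x\notin\Omega$, $t>0$; and $u(x,0)\ge u_0(x)$ for $x\in\Omega$. Subsolutions are defined with reversed inequalities. *)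

theory Defs
  imports "HOL-Analysis.Analysis"
begin

type_synonym 'n gvec = "(real, 'n) vec"

text \<open>Carnot group G modelled in exponential coordinates: G = 'n gvec (via exp),
  the index type 'n is ordered (adapted basis X_1,...,X_n), lam i is the degree
  of the basis vector X_i, the group law is gmul, exp^{-1} is the identity,
  the group inverse of x is -x, Haar measure is lborel.\<close>

definition dil :: "('n::finite \<Rightarrow> nat) \<Rightarrow> real \<Rightarrow> 'n gvec \<Rightarrow> 'n gvec" where
  "dil lam r x = (\<chi> i. r ^ lam i * x $ i)"

definition layer :: "('n::finite \<Rightarrow> nat) \<Rightarrow> nat \<Rightarrow> ('n gvec) set" where
  "layer lam k = {x. \<forall>i. lam i \<noteq> k \<longrightarrow> x $ i = 0}"

definition bracket :: "(('n::finite) gvec \<Rightarrow> 'n gvec \<Rightarrow> 'n gvec) \<Rightarrow> 'n gvec \<Rightarrow> 'n gvec \<Rightarrow> 'n gvec" where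
  "bracket gmul X Y = Lim (at 0) (\<lambda>t::real. (1 / t^2) *\<^sub>R
       gmul (gmul (gmul (t *\<^sub>R X) (t *\<^sub>R Y)) (- (t *\<^sub>R X))) (- (t *\<^sub>R Y)))"

definition carnot_exp_coords ::
  "('n::{finite,wellorder} gvec \<Rightarrow> 'n gvec \<Rightarrow> 'n gvec) \<Rightarrow> ('n \<Rightarrow> nat) \<Rightarrow> bool" where
  "carnot_exp_coords gmul lam \<longleftrightarrow>
     (\<forall>x y z. gmul (gmul x y) z = gmul x (gmul y z)) \<and>
     (\<forall>x. gmul 0 x = x \<and> gmul x 0 = x \<and> gmul x (- x) = 0 \<and> gmul (- x) x = 0) \<and>
     (\<forall>x (s::real) t. gmul (s *\<^sub>R x) (t *\<^sub>R x) = (s + t) *\<^sub>R x) \<and>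
     continuous_on UNIV (\<lambda>p. gmul (fst p) (snd p)) \<and>
     (\<forall>i. lam i \<ge> 1) \<and> (\<exists>i. lam i = 1) \<and> mono lam \<and>
     (\<forall>r>0. \<forall>x y. dil lam r (gmul x y) = gmul (dil lam r x) (dil lam r y)) \<and>
     (\<forall>X Y. ((\<lambda>t::real. (1 / t^2) *\<^sub>R
         gmul (gmul (gmul (t *\<^sub>R X) (t *\<^sub>R Y)) (- (t *\<^sub>R X))) (- (t *\<^sub>R Y)))
         \<longlongrightarrow> bracket gmul X Y) (at 0)) \<and>
     (\<forall>k\<ge>1. (\<exists>i. lam i = Suc k) \<longrightarrow>
         span {bracket gmul X Y | X Y. X \<in> layer lam 1 \<and> Y \<in> layer lam k} = layer lam (Suc k))"

definition partial :: "'n::finite \<Rightarrow> ('n gvec \<Rightarrow> real) \<Rightarrow> 'n gvec \<Rightarrow> real" where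
  "partial i f x = deriv (\<lambda>t. f (x + t *\<^sub>R axis i 1)) 0"

fun Ck_on :: "nat \<Rightarrow> (('n::finite) gvec) set \<Rightarrow> ('n gvec \<Rightarrow> real) \<Rightarrow> bool" where
  "Ck_on 0 S f = continuous_on S f"
| "Ck_on (Suc k) S f = (continuous_on S f \<and>
     (\<forall>x\<in>S. \<forall>i. (\<lambda>t. f (x + t *\<^sub>R axis i 1)) differentiable (at 0)) \<and>
     (\<forall>i. Ck_on k S (partial i f)))"

definition smooth_on_closure :: "(('n::finite) gvec) set \<Rightarrow> ('n gvec \<Rightarrow> real) \<Rightarrow> bool" where
  "smooth_on_closure \<Omega> f \<longleftrightarrow> (\<exists>U. open U \<and> closure \<Omega> \<subseteq> U \<and> (\<forall>k. Ck_on k U f))"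

definition Amat :: "('n::finite \<Rightarrow> nat) \<Rightarrow> ('n \<Rightarrow> 'n \<Rightarrow> 'n gvec \<Rightarrow> real) \<Rightarrow> 'n gvec \<Rightarrow> ('n gvec, 'n) vec" where
  "Amat lam a x = (\<chi> i j. if lam i = 1 \<and> lam j = 1 then a i j x else (if i = j then 1 else 0))"

definition Wmat :: "('n::finite \<Rightarrow> nat) \<Rightarrow> ('n \<Rightarrow> 'n gvec \<Rightarrow> real) \<Rightarrow> real \<Rightarrow> 'n gvec \<Rightarrow> ('n gvec, 'n) vec" where
  "Wmat lam b eps x = (\<chi> i j. if i = j then
       (if lam i = 1 then b i x else if lam i = 2 then b i x / eps^2 else 1) else 0)"

definition homdim :: "('n::finite \<Rightarrow> nat) \<Rightarrow> nat" where
  "homdim lam = (\<Sum>i\<in>UNIV. lam i)"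

definition afun :: "real \<Rightarrow> ('n::finite) gvec \<Rightarrow> real" where
  "afun M z = (\<Sum>i\<in>UNIV. z $ i) + M"

definition cfun :: "('n::finite \<Rightarrow> nat) \<Rightarrow> ('n \<Rightarrow> 'n \<Rightarrow> 'n gvec \<Rightarrow> real) \<Rightarrow> real \<Rightarrow> real \<Rightarrow> 'n gvec \<Rightarrow> real" where
  "cfun lam a CJ M x = 2 / (CJ * M * sqrt (det (Amat lam a x)))"

definition Emat :: "('n::finite \<Rightarrow> nat) \<Rightarrow> ('n \<Rightarrow> 'n \<Rightarrow> 'n gvec \<Rightarrow> real) \<Rightarrow> ('n \<Rightarrow> 'n gvec \<Rightarrow> real)
     \<Rightarrow> real \<Rightarrow> real \<Rightarrow> ('n::finite) gvec \<Rightarrow> ('n gvec, 'n) vec" where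
  "Emat lam a b M eps x = (M / 2) *\<^sub>R (Wmat lam b eps x ** matrix_inv (Amat lam a x))"

text \<open>The kernel K_eps(x,y); y^{-1}x = gmul (-y) x in exponential coordinates.\<close>
definition Keps :: "(('n::finite) gvec \<Rightarrow> 'n gvec \<Rightarrow> 'n gvec) \<Rightarrow> ('n \<Rightarrow> nat)
    \<Rightarrow> ('n \<Rightarrow> 'n \<Rightarrow> 'n gvec \<Rightarrow> real) \<Rightarrow> ('n gvec \<Rightarrow> ('n gvec, 'n) vec) \<Rightarrow> ('n \<Rightarrow> 'n gvec \<Rightarrow> real)
    \<Rightarrow> ('n gvec \<Rightarrow> real) \<Rightarrow> real \<Rightarrow> real \<Rightarrow> real \<Rightarrow> 'n gvec \<Rightarrow> 'n gvec \<Rightarrow> real" where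
  "Keps gmul lam a L b J CJ M eps x y =
     cfun lam a CJ M x / eps ^ (homdim lam + 2)
     * afun M (- (Emat lam a b M eps x *v gmul (- y) x))
     * J (matrix_inv (L x) *v dil lam (1 / eps) (gmul (- y) x))"

definition supersolution :: "(('n::finite) gvec \<Rightarrow> 'n gvec \<Rightarrow> real) \<Rightarrow> ('n gvec) set \<Rightarrow> real
    \<Rightarrow> (('n::finite) gvec \<Rightarrow> real \<Rightarrow> real) \<Rightarrow> ('n gvec \<Rightarrow> real) \<Rightarrow> ('n gvec \<Rightarrow> real \<Rightarrow> real) \<Rightarrow> bool" where
  "supersolution K \<Omega> T g u0 u \<longleftrightarrow>
     (\<forall>x\<in>\<Omega>. \<forall>t\<in>{0<..T}. \<exists>D. ((\<lambda>s. u x s) has_real_derivative D) (at t within {0..T}) \<and>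
          D \<ge> (\<integral>y. K x y * (u y t - u x t) \<partial>lborel)) \<and>
     (\<forall>x. x \<notin> \<Omega> \<longrightarrow> (\<forall>t\<in>{0<..T}. u x t \<ge> g x t)) \<and>
     (\<forall>x\<in>\<Omega>. u x 0 \<ge> u0 x)"

end

theory Submission
  imports Defs
begin

text \<open>Weak minimum principle. Perturb u to w(x,t) = u(x,t) + \<delta> t with \<delta> > 0 so small that
  w still takes a negative value, and let (x,t) be a minimum of w on the compact set
  closure \<Omega> \<times> [0,T]. The data force x \<in> \<Omega> and t > 0. Then u(\<cdot>,t) is minimal at x, so the
  nonlocal term, an integral of K(x,y) (u(y,t) - u(x,t)) with K \<ge> 0, is nonnegative and the
  supersolution inequality gives u_t(x,t) \<ge> 0; but minimality of w in time gives
  u_t(x,t) + \<delta> \<le> 0.\<close>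

lemma has_real_derivative_nonpos_at_min:
  fixes f :: "real \<Rightarrow> real"
  assumes f': "(f has_real_derivative D) (at t within {a..b})"
    and t: "a < t" "t \<le> b"
    and min: "\<forall>s\<in>{a..b}. f t \<le> f s"
  shows "D \<le> 0"
proof -
  have "(f has_real_derivative D) (at t within {a..<t})"
    by (rule DERIV_subset[OF f']) (use t in auto)
  then have quotient_lim: "((\<lambda>s. (f s - f t) / (s - t)) \<longlongrightarrow> D) (at t within {a..<t})"
    by (simp add: has_field_derivative_iff)
  have "eventually (\<lambda>s. (f s - f t) / (s - t) \<le> 0) (at t within {a..<t})"
    unfolding eventually_at_filter
  proof (rule always_eventually, intro allI impI)
    fix s assume "s \<noteq> t" "s \<in> {a..<t}"
    then have "f t \<le> f s" "s - t < 0" using min t by auto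
    then show "(f s - f t) / (s - t) \<le> 0" by (simp add: divide_nonneg_neg)
  qed
  moreover have "at t within {a..<t} \<noteq> bot"
    using t trivial_limit_within[of t "{a..<t}"] by auto
  ultimately show ?thesis by (rule tendsto_upperbound[OF quotient_lim])
qed

lemma continuous_on_nonneg_at_left_endpoint:
  fixes f :: "real \<Rightarrow> real"
  assumes "continuous_on {a..b} f" "a < b" "\<forall>t\<in>{a<..b}. 0 \<le> f t"
  shows "0 \<le> f a"
proof -
  have "(f \<longlongrightarrow> f a) (at a within {a..b})"
    using assms(1,2) unfolding continuous_on_def by auto
  moreover have "eventually (\<lambda>t. 0 \<le> f t) (at a within {a..b})"
    unfolding eventually_at_filter by (rule always_eventually) (use assms(3) in auto)
  moreover have "at a within {a..b} \<noteq> bot"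
    using assms(2) trivial_limit_within[of a "{a..b}"] by auto
  ultimately show ?thesis by (rule tendsto_lowerbound)
qed

lemma supersolution_nonneg_on_parabolic_boundary:
  fixes u :: "'n::finite gvec \<Rightarrow> real \<Rightarrow> real"
  assumes super: "supersolution K \<Omega> T g u0 u"
    and g: "\<forall>x t. 0 \<le> g x t" and u0: "\<forall>x\<in>\<Omega>. 0 \<le> u0 x"
    and u_cont: "continuous_on (closure \<Omega> \<times> {0..T}) (\<lambda>(x, t). u x t)"
    and T: "0 < T"
    and x: "x \<in> closure \<Omega>" and t: "t \<in> {0..T}" and boundary: "x \<notin> \<Omega> \<or> t = 0"
  shows "0 \<le> u x t"
proof -
  have outside: "0 \<le> u x s" if "x \<notin> \<Omega>" "s \<in> {0<..T}" for s
    using super g that unfolding supersolution_def by (meson order_trans)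
  consider "x \<in> \<Omega>" "t = 0" | "x \<notin> \<Omega>" "t \<in> {0<..T}" | "x \<notin> \<Omega>" "t = 0"
    using boundary t by fastforce
  then show ?thesis
  proof cases
    case 1
    then show ?thesis using super u0 unfolding supersolution_def by (meson order_trans)
  next
    case 2
    then show ?thesis using outside by blast
  next
    case 3
    have "continuous_on {0..T} ((\<lambda>(x, t). u x t) \<circ> (\<lambda>s. (x, s)))"
      by (rule continuous_on_compose[OF _ continuous_on_subset[OF u_cont]])
         (use x in \<open>auto intro!: continuous_intros\<close>)
    then have "continuous_on {0..T} (u x)" by (simp add: o_def)
    then show ?thesis
      using continuous_on_nonneg_at_left_endpoint T outside[OF \<open>x \<notin> \<Omega>\<close>] \<open>t = 0\<close> by blast
  qed
qed

lemma supersolution_time_derivative_nonneg_at_spatial_min: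
  fixes u :: "'n::finite gvec \<Rightarrow> real \<Rightarrow> real"
  assumes super: "supersolution K \<Omega> T g u0 u"
    and K_nonneg: "\<forall>y. 0 \<le> K x y"
    and x: "x \<in> \<Omega>" and t: "t \<in> {0<..T}"
    and space_min: "\<forall>y. u x t \<le> u y t"
  obtains D where "(u x has_real_derivative D) (at t within {0..T})" "0 \<le> D"
proof -
  obtain D where u': "(u x has_real_derivative D) (at t within {0..T})"
    and D_ge: "(\<integral>y. K x y * (u y t - u x t) \<partial>lborel) \<le> D"
    using super x t unfolding supersolution_def by blast
  have "0 \<le> (\<integral>y. K x y * (u y t - u x t) \<partial>lborel)"
    using K_nonneg space_min by (intro Bochner_Integration.integral_nonneg) simp
  with D_ge show ?thesis using that[OF u'] by linarith
qed

lemma supersolution_nonneg: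
  fixes u :: "'n::finite gvec \<Rightarrow> real \<Rightarrow> real"
  assumes super: "supersolution K \<Omega> T g u0 u"
    and K_nonneg: "\<forall>x\<in>\<Omega>. \<forall>y. 0 \<le> K x y"
    and g: "\<forall>x t. 0 \<le> g x t" and u0: "\<forall>x\<in>\<Omega>. 0 \<le> u0 x"
    and u_cont: "continuous_on (closure \<Omega> \<times> {0..T}) (\<lambda>(x, t). u x t)"
    and bounded: "bounded \<Omega>" and T: "0 < T"
  shows "\<forall>x\<in>closure \<Omega>. \<forall>t\<in>{0..T}. 0 \<le> u x t"
proof (rule ccontr)
  note boundary_nonneg = supersolution_nonneg_on_parabolic_boundary[OF super g u0 u_cont T]
  assume "\<not> ?thesis"
  then obtain x0 t0 where x0: "x0 \<in> closure \<Omega>" and t0: "t0 \<in> {0..T}" and neg: "u x0 t0 < 0"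
    by (auto simp: not_le)
  define \<delta> where "\<delta> = - u x0 t0 / (2 * T)"
  define w where "w = (\<lambda>(x, t). u x t + \<delta> * t)"
  have \<delta>_pos: "0 < \<delta>" using neg T by (simp add: \<delta>_def divide_neg_pos)
  have "\<delta> * t0 \<le> - u x0 t0 / 2" using \<delta>_pos t0 T mult_left_mono[of t0 T \<delta>] by (simp add: \<delta>_def)
  then have w0_neg: "w (x0, t0) < 0" using neg by (simp add: w_def)
  have "continuous_on (closure \<Omega> \<times> {0..T}) w"
    unfolding w_def case_prod_beta by (intro continuous_intros u_cont[unfolded case_prod_beta])
  moreover have "compact (closure \<Omega> \<times> {0..T})"
    using bounded by (simp add: compact_closure compact_Times)
  ultimately obtain xm tm where xm: "xm \<in> closure \<Omega>" and tm: "tm \<in> {0..T}"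
    and w_min: "\<forall>q\<in>closure \<Omega> \<times> {0..T}. w (xm, tm) \<le> w q"
    using continuous_attains_inf[of "closure \<Omega> \<times> {0..T}" w] x0 t0 by fastforce
  have "w (xm, tm) < 0" using w_min[rule_format, of "(x0, t0)"] x0 t0 w0_neg by simp
  moreover have "0 \<le> \<delta> * tm" using \<delta>_pos tm by simp
  ultimately have um_neg: "u xm tm < 0" by (simp add: w_def)
  then have xm_in: "xm \<in> \<Omega>" and tm_pos: "0 < tm"
    using boundary_nonneg[OF xm tm] tm by (auto simp: less_eq_real_def)
  have space_min: "u xm tm \<le> u y tm" for y
  proof (cases "y \<in> \<Omega>")
    case True
    then have "w (xm, tm) \<le> w (y, tm)" using w_min tm closure_subset[of \<Omega>] by blast
    then show ?thesis by (simp add: w_def)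
  next
    case False
    then have "g y tm \<le> u y tm" using super tm_pos tm unfolding supersolution_def by auto
    then show ?thesis using g[rule_format, of y tm] um_neg by linarith
  qed
  then obtain D where u': "(u xm has_real_derivative D) (at tm within {0..T})"
    and D_nonneg: "0 \<le> D"
    using supersolution_time_derivative_nonneg_at_spatial_min[OF super] K_nonneg xm_in tm_pos tm
    by (metis greaterThanAtMost_iff atLeastAtMost_iff)
  have "((\<lambda>s. u xm s + \<delta> * s) has_real_derivative D + \<delta>) (at tm within {0..T})"
    by (rule DERIV_add[OF u']) (auto intro!: derivative_eq_intros)
  moreover have "\<forall>s\<in>{0..T}. u xm tm + \<delta> * tm \<le> u xm s + \<delta> * s"
    using w_min xm by (auto simp: w_def)
  ultimately have "D + \<delta> \<le> 0"
    using has_real_derivative_nonpos_at_min tm_pos tm by fastforce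
  then show False using D_nonneg \<delta>_pos by linarith
qed

theorem lemma4p3:
  fixes gmul :: "'n::{finite,wellorder} gvec \<Rightarrow> 'n gvec \<Rightarrow> 'n gvec"
    and lam :: "'n \<Rightarrow> nat"
    and \<Omega> :: "('n gvec) set"
    and a :: "'n \<Rightarrow> 'n \<Rightarrow> 'n gvec \<Rightarrow> real"
    and L :: "'n gvec \<Rightarrow> ('n gvec, 'n) vec"
    and b :: "'n \<Rightarrow> 'n gvec \<Rightarrow> real"
    and J :: "'n gvec \<Rightarrow> real"
    and CJ M eps T :: real
    and u0 :: "'n gvec \<Rightarrow> real"
    and g u :: "'n gvec \<Rightarrow> real \<Rightarrow> real"
  assumes carnot: "carnot_exp_coords gmul lam"
    and \<Omega>: "open \<Omega>" "bounded \<Omega>" "connected \<Omega>"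
    and J_int: "integrable lborel J"
    and J_pos: "\<forall>x. J x \<ge> 0"
    and J_supp: "compact (closure {x. J x \<noteq> 0})"
    and J_sym: "\<forall>x. J x = J (- x)"
    and J_mom1: "\<forall>i. (\<integral>t. J t * t $ i \<partial>lborel) = 0"
    and J_mom2: "\<forall>i j. (\<integral>t. J t * (t $ i * t $ j) \<partial>lborel) = (if i = j then CJ else 0)"
    and CJ: "CJ > 0"
    and a_sym: "\<forall>i j x. lam i = 1 \<and> lam j = 1 \<longrightarrow> a i j x = a j i x"
    and a_pd: "\<forall>x\<in>closure \<Omega>. \<forall>v. (\<exists>i. lam i = 1 \<and> v i \<noteq> 0) \<longrightarrow>
                  (\<Sum>i\<in>{i. lam i = 1}. \<Sum>j\<in>{j. lam j = 1}. v i * a i j x * v j) > 0"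
    and a_smooth: "\<forall>i j. lam i = 1 \<and> lam j = 1 \<longrightarrow> smooth_on_closure \<Omega> (a i j)"
    and L_chol: "\<forall>x\<in>closure \<Omega>. Amat lam a x = L x ** transpose (L x) \<and>
                  (\<forall>i j. i < j \<longrightarrow> L x $ i $ j = 0) \<and> (\<forall>i. L x $ i $ i > 0)"
    and b_smooth: "\<forall>i. smooth_on_closure \<Omega> (b i)"
    and M: "M > 0"
    and M_large: "\<exists>\<beta>>0. \<forall>y\<in>\<Omega>. \<forall>z\<in>closure {x. J x \<noteq> 0}.
                  afun M (gmul y (dil lam eps (L y *v (- z)))) \<ge> \<beta>"
    and K_pos: "\<forall>x\<in>\<Omega>. \<forall>y. Keps gmul lam a L b J CJ M eps x y \<ge> 0"
    and eps: "eps > 0"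
    and T: "T > 0"
    and u0: "continuous_on (closure \<Omega>) u0" "\<forall>x\<in>closure \<Omega>. u0 x \<ge> 0"
    and g: "\<forall>x t. g x t \<ge> 0"
    and u_cont: "continuous_on (closure \<Omega> \<times> {0..T}) (\<lambda>(x, t). u x t)"
    and super: "supersolution (Keps gmul lam a L b J CJ M eps) \<Omega> T g u0 u"
  shows "\<forall>x\<in>closure \<Omega>. \<forall>t\<in>{0..T}. u x t \<ge> 0"
proof (rule supersolution_nonneg[OF super K_pos g _ u_cont \<Omega>(2) T])
  show "\<forall>x\<in>\<Omega>. 0 \<le> u0 x" using u0(2) closure_subset by blast
qed

end
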